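(* Let $t\in\mathbb{N}$ and let $H$ be a graph with vertex set $A\cup T$ such that: (1) $|A|\ge 3t^2+t+1$; (2) $A$ is a clique in $H$; (3) $T=V(Q_1)\cup V(Q_2)\cup V(Q_3)$, where $Q_1,Q_2,Q_3$ are paths in $H$, each starting at a common vertex $w\notin A$ and ending in $A$, such that $Q_1-w$, $Q_2-w$, $Q_3-w$ are pairwise vertex-disjoint; (4) $\deg_H(w)=3$; (5) $|A\cap T|=3$, and the three vertices of $A\cap T$ are the endpoints $y_1,y_2,y_3$ of $Q_1,Q_2,Q_3$ different from $w$; (6) $H[V(Q_1)\cup V(Q_2)]$ is a chordless cycle; (7) $A\setminus T$ and $T\setminus A$ are anticomplete to each other. Then $H\xrightarrow{\cap} tS_{t,t,t}$.
   Context: All graphs are finite and simple. For graphs $G_1=(V_1,E_1)$, $G_2=(V_2,E_2)$, $G_1\cap G_2=(V_1\cap V_2, E_1\cap E_2)$. For a graph $G=(V,E)$ and an injective map $\alpha$ on $V$, $G^{\alpha}$ has vertex set $\alpha(V)$ and edge set $\{\{\alpha(v),\alpha(w)\}: \{v,w\}\in E\}$. We write $G\xrightarrow{\cap} H$ if $H$ is (isomorphic to) $G^{\alpha_1}\cap\cdots\cap G^{\alpha_k}$ for some $k\ge1$ and injective maps $\alpha_1,\dots,\alpha_k$ on $V(G)$. For integers $a,b,c\ge1$, $S_{a,b,c}$ is the tree consisting of a vertex of degree $3$ together with three pendant paths having $a$, $b$, $c$ edges respectively; $tS_{t,t,t}$ is the disjoint union of $t$ copies of $S_{t,t,t}$.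 Sets are anticomplete if no edge joins them. *)

theory Defs
  imports Main
begin

definition graph :: "'a set \<Rightarrow> 'a set set \<Rightarrow> bool" where
  "graph V E \<longleftrightarrow> finite V \<and> (\<forall>e\<in>E. \<exists>u v. e = {u, v} \<and> u \<noteq> v \<and> u \<in> V \<and> v \<in> V)"

definition graph_iso :: "'a set \<Rightarrow> 'a set set \<Rightarrow> 'b set \<Rightarrow> 'b set set \<Rightarrow> bool" where
  "graph_iso V E V' E' \<longleftrightarrow>
     (\<exists>f. bij_betw f V V' \<and> (\<forall>u\<in>V. \<forall>v\<in>V. {u, v} \<in> E \<longleftrightarrow> {f u, f v} \<in> E'))"

text \<open>G \<rightarrow>\<inter> H: H is isomorphic to an intersection of k >= 1 injective relabellings of G.
  The relabellings take values in nat (a countably infinite universe, sufficient for finite graphs).\<close>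
definition int_reach :: "'a set \<Rightarrow> 'a set set \<Rightarrow> 'b set \<Rightarrow> 'b set set \<Rightarrow> bool" where
  "int_reach V E V' E' \<longleftrightarrow>
     (\<exists>k::nat. k \<ge> 1 \<and> (\<exists>\<alpha> :: nat \<Rightarrow> 'a \<Rightarrow> nat.
        (\<forall>i<k. inj_on (\<alpha> i) V) \<and>
        graph_iso V' E' (\<Inter>i<k. \<alpha> i ` V) (\<Inter>i<k. (\<lambda>e. \<alpha> i ` e) ` E)))"

text \<open>t S_{t,t,t}: copy c < t has centre (c,0,0) and legs j \<in> {1,2,3} with vertices (c,j,p), 1 <= p <= t.\<close>
definition tS_V :: "nat \<Rightarrow> (nat \<times> nat \<times> nat) set" where
  "tS_V t = {(c, 0, 0) | c. c < t} \<union> {(c, j, p) | c j p. c < t \<and> j \<in> {1,2,3} \<and> 1 \<le> p \<and> p \<le> t}"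

definition tS_E :: "nat \<Rightarrow> (nat \<times> nat \<times> nat) set set" where
  "tS_E t = {{(c, 0, 0), (c, j, 1)} | c j. c < t \<and> j \<in> {1,2,3}}
          \<union> {{(c, j, p), (c, j, p + 1)} | c j p. c < t \<and> j \<in> {1,2,3} \<and> 1 \<le> p \<and> p < t}"

definition is_path :: "'a set set \<Rightarrow> 'a list \<Rightarrow> bool" where
  "is_path E P \<longleftrightarrow> P \<noteq> [] \<and> distinct P \<and> (\<forall>i. Suc i < length P \<longrightarrow> {P ! i, P ! Suc i} \<in> E)"

definition degree :: "'a set \<Rightarrow> 'a set set \<Rightarrow> 'a \<Rightarrow> nat" where
  "degree V E w = card {v \<in> V. {w, v} \<in> E}"

definition induced_edges :: "'a set set \<Rightarrow> 'a set \<Rightarrow> 'a set set" where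
  "induced_edges E X = {e \<in> E. e \<subseteq> X}"

definition is_cycle :: "'a set \<Rightarrow> 'a set set \<Rightarrow> bool" where
  "is_cycle V E \<longleftrightarrow> (\<exists>vs. distinct vs \<and> length vs \<ge> 3 \<and> set vs = V \<and>
      E = {{vs ! i, vs ! ((i + 1) mod length vs)} | i. i < length vs})"

definition clique :: "'a set set \<Rightarrow> 'a set \<Rightarrow> bool" where
  "clique E A \<longleftrightarrow> (\<forall>x\<in>A. \<forall>y\<in>A. x \<noteq> y \<longrightarrow> {x, y} \<in> E)"

definition anticomplete :: "'a set set \<Rightarrow> 'a set \<Rightarrow> 'a set \<Rightarrow> bool" where
  "anticomplete E X Y \<longleftrightarrow> (\<forall>x\<in>X. \<forall>y\<in>Y. {x, y} \<notin> E)"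

end

theory Submission
  imports Defs "HOL-Library.Nat_Bijection"
begin

text \<open>Every vertex s of tS_{t,t,t} gets its own injective homomorphism into H
  that sends s into T - A and every vertex outside a small "shadow" of s into the clique B = A - T:
  for a centre, its copy is laid along the three paths from w; for a leg vertex, the rest of its
  leg is laid along the path from y1 through w to y2, the vertex itself landing on the second
  vertex of that path. All remaining vertices fit injectively into B because |B| = |A| - 3, and
  edges leaving the laid-out part start in the clique A. Since B is anticomplete to T - A, any two
  non-adjacent vertices are separated by one of these homomorphisms, and relabelling H along all
  of them, with fresh labels off the images, yields tS_{t,t,t} as the intersection.\<close>

definition inj_graph_hom :: "'b set \<Rightarrow> 'b set set \<Rightarrow> 'a set \<Rightarrow> 'a set set \<Rightarrow> ('b \<Rightarrow> 'a) \<Rightarrow> bool" where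
  "inj_graph_hom S F V E \<phi> \<longleftrightarrow>
     inj_on \<phi> S \<and> \<phi> ` S \<subseteq> V \<and> (\<forall>x\<in>S. \<forall>y\<in>S. {x, y} \<in> F \<longrightarrow> {\<phi> x, \<phi> y} \<in> E)"

lemma graph_singleton_notin: "graph V E \<Longrightarrow> {v} \<notin> E"
  unfolding graph_def by (force simp: doubleton_eq_iff)

text \<open>Vertices on the embedded copy \<open>\<phi> ` S\<close> get labels tagged 0, shared by all relabellings;
  every other vertex gets a label tagged with the index i of the relabelling.\<close>
definition relabel :: "('b \<Rightarrow> nat) \<Rightarrow> ('a \<Rightarrow> nat) \<Rightarrow> 'b set \<Rightarrow> ('b \<Rightarrow> 'a) \<Rightarrow> nat \<Rightarrow> 'a \<Rightarrow> nat" where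
  "relabel cd enc S \<phi> i v = prod_encode
     (if v \<in> \<phi> ` S then (0, cd (the_inv_into S \<phi> v)) else (Suc i, enc v))"

lemma relabel_image: "inj_on \<phi> S \<Longrightarrow> x \<in> S \<Longrightarrow> relabel cd enc S \<phi> i (\<phi> x) = prod_encode (0, cd x)"
  by (simp add: relabel_def the_inv_into_f_f)

lemma inj_on_relabel:
  assumes "inj_on cd S" "inj_on enc V" "inj_on \<phi> S"
  shows "inj_on (relabel cd enc S \<phi> i) V"
proof (rule inj_onI)
  fix u v assume "u \<in> V" "v \<in> V" and eq: "relabel cd enc S \<phi> i u = relabel cd enc S \<phi> i v"
  consider "u \<in> \<phi> ` S" "v \<in> \<phi> ` S" | "u \<notin> \<phi> ` S" "v \<notin> \<phi> ` S"
    using eq by (auto simp: relabel_def split: if_splits)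
  then show "u = v"
  proof cases
    case 1
    then obtain x y where "x \<in> S" "y \<in> S" "u = \<phi> x" "v = \<phi> y"
      by blast
    moreover have "cd x = cd y"
      using eq calculation by (simp add: relabel_image[OF assms(3)])
    ultimately show ?thesis
      using inj_onD[OF assms(1)] by blast
  next
    case 2
    then show ?thesis
      using eq inj_onD[OF assms(2)] \<open>u \<in> V\<close> \<open>v \<in> V\<close> by (simp add: relabel_def)
  qed
qed

lemma relabel_eq_relabel_other:
  assumes "relabel cd enc S \<phi> i u = relabel cd enc S \<psi> j v" "i \<noteq> j" "inj_on \<phi> S"
  shows "\<exists>x\<in>S. relabel cd enc S \<phi> i u = prod_encode (0, cd x)"
proof (cases "u \<in> \<phi> ` S")
  case True
  then show ?thesis
    using the_inv_into_into[OF assms(3) True order_refl] by (auto simp: relabel_def)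
next
  case False
  then show ?thesis
    using assms(1,2) by (simp add: relabel_def split: if_splits)
qed

lemma relabellings_agreeing_on_embeddings:
  fixes \<phi> :: "nat \<Rightarrow> 'b \<Rightarrow> 'a"
  assumes "finite V" "finite S" "2 \<le> k"
    and emb: "\<forall>i<k. inj_on (\<phi> i) S \<and> \<phi> i ` S \<subseteq> V"
  obtains f :: "'b \<Rightarrow> nat" and \<alpha> :: "nat \<Rightarrow> 'a \<Rightarrow> nat"
  where "inj_on f S" "\<And>i. i < k \<Longrightarrow> inj_on (\<alpha> i) V"
    "\<And>i x. i < k \<Longrightarrow> x \<in> S \<Longrightarrow> \<alpha> i (\<phi> i x) = f x"
    "(\<Inter>i<k. \<alpha> i ` V) = f ` S"
proof -
  obtain enc :: "'a \<Rightarrow> nat" and n where enc: "inj_on enc V"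
    using finite_imp_inj_to_nat_seg[OF \<open>finite V\<close>] by blast
  obtain cd :: "'b \<Rightarrow> nat" and m where cd: "inj_on cd S"
    using finite_imp_inj_to_nat_seg[OF \<open>finite S\<close>] by blast
  define f where "f x = prod_encode (0, cd x)" for x
  define \<alpha> where "\<alpha> i = relabel cd enc S (\<phi> i) i" for i
  have inj\<phi>: "inj_on (\<phi> i) S" and \<phi>_S: "\<phi> i ` S \<subseteq> V" if "i < k" for i
    using emb that by auto
  have \<alpha>_\<phi>: "\<alpha> i (\<phi> i x) = f x" if "i < k" "x \<in> S" for i x
    using relabel_image[OF inj\<phi>] that by (simp add: \<alpha>_def f_def)
  show ?thesis
  proof (rule that[of f \<alpha>])
    show "inj_on f S"
      using cd by (simp add: f_def inj_on_def)
    show "inj_on (\<alpha> i) V" if "i < k" for i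
      unfolding \<alpha>_def by (rule inj_on_relabel[OF cd enc inj\<phi>[OF that]])
    show "\<alpha> i (\<phi> i x) = f x" if "i < k" "x \<in> S" for i x
      using that by (rule \<alpha>_\<phi>)
    show "(\<Inter>i<k. \<alpha> i ` V) = f ` S"
    proof
      show "f ` S \<subseteq> (\<Inter>i<k. \<alpha> i ` V)"
      proof (intro subsetI INT_I)
        fix n i assume "n \<in> f ` S" "i \<in> {..<k}"
        then obtain x where "x \<in> S" "n = \<alpha> i (\<phi> i x)"
          using \<alpha>_\<phi> by auto
        then show "n \<in> \<alpha> i ` V"
          using \<phi>_S \<open>i \<in> {..<k}\<close> by auto
      qed
      show "(\<Inter>i<k. \<alpha> i ` V) \<subseteq> f ` S"
      proof
        fix n assume "n \<in> (\<Inter>i<k. \<alpha> i ` V)"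
        then have "n \<in> \<alpha> 0 ` V" "n \<in> \<alpha> 1 ` V"
          using \<open>2 \<le> k\<close> by auto
        then obtain u v where "\<alpha> 0 u = n" "\<alpha> 1 v = n"
          by (metis imageE)
        then show "n \<in> f ` S"
          using relabel_eq_relabel_other[of cd enc S "\<phi> 0" 0 u "\<phi> 1" 1 v] inj\<phi> \<open>2 \<le> k\<close>
          by (auto simp: \<alpha>_def f_def)
      qed
    qed
  qed
qed

lemma doubleton_in_INT_image_iff:
  assumes inj: "\<And>i. i < k \<Longrightarrow> inj_on (\<alpha> i) V" and "E \<subseteq> Pow V"
    and "\<And>i. i < k \<Longrightarrow> u i \<in> V \<and> v i \<in> V"
    and "\<And>i. i < k \<Longrightarrow> \<alpha> i (u i) = a \<and> \<alpha> i (v i) = b"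
  shows "{a, b} \<in> (\<Inter>i<k. image (\<alpha> i) ` E) \<longleftrightarrow> (\<forall>i<k. {u i, v i} \<in> E)"
proof -
  have "{a, b} \<in> image (\<alpha> i) ` E \<longleftrightarrow> {u i, v i} \<in> E" if "i < k" for i
  proof -
    have image: "{a, b} = \<alpha> i ` {u i, v i}" and pow: "{u i, v i} \<in> Pow V"
      using assms(3,4) that by auto
    show ?thesis
      unfolding image by (rule inj_on_image_mem_iff[OF inj_on_image_Pow[OF inj[OF that]] pow \<open>E \<subseteq> Pow V\<close>])
  qed
  then show ?thesis
    by auto
qed

lemma int_reach_if_separating_homs:
  assumes G: "graph V E" and "finite S" and loopless: "\<And>x. {x} \<notin> F"
    and "finite \<Phi>" "\<Phi> \<noteq> {}" and homs: "\<And>\<phi>. \<phi> \<in> \<Phi> \<Longrightarrow> inj_graph_hom S F V E \<phi>"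
    and separating: "\<And>x y. x \<in> S \<Longrightarrow> y \<in> S \<Longrightarrow> x \<noteq> y \<Longrightarrow> {x, y} \<notin> F \<Longrightarrow>
      \<exists>\<phi>\<in>\<Phi>. {\<phi> x, \<phi> y} \<notin> E"
  shows "int_reach V E S F"
proof -
  have "finite V" and "E \<subseteq> Pow V"
    using G unfolding graph_def by auto
  \<comment> \<open>Each embedding is listed twice so that at least two relabellings are intersected.\<close>
  obtain xs where "set xs = \<Phi>"
    using \<open>finite \<Phi>\<close> finite_list by blast
  define ps where "ps = xs @ xs"
  define k where "k = length ps"
  have set_ps: "set ps = \<Phi>" and "2 \<le> k"
    using \<open>set xs = \<Phi>\<close> \<open>\<Phi> \<noteq> {}\<close> by (auto simp: ps_def k_def) (cases xs; simp)
  have ps_hom: "\<forall>i<k. inj_graph_hom S F V E (ps ! i)"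
    using homs nth_mem set_ps k_def by blast
  then have "\<forall>i<k. inj_on (ps ! i) S \<and> (ps ! i) ` S \<subseteq> V"
    unfolding inj_graph_hom_def by blast
  then obtain f :: "_ \<Rightarrow> nat" and \<alpha> where inj_f: "inj_on f S" and inj_\<alpha>: "\<And>i. i < k \<Longrightarrow> inj_on (\<alpha> i) V"
    and \<alpha>_ps: "\<And>i x. i < k \<Longrightarrow> x \<in> S \<Longrightarrow> \<alpha> i ((ps ! i) x) = f x"
    and vertices: "(\<Inter>i<k. \<alpha> i ` V) = f ` S"
    by (rule relabellings_agreeing_on_embeddings[OF \<open>finite V\<close> \<open>finite S\<close> \<open>2 \<le> k\<close>]) (rule that)
  have F_iff: "{x, y} \<in> F \<longleftrightarrow> (\<forall>\<phi>\<in>\<Phi>. {\<phi> x, \<phi> y} \<in> E)" if "x \<in> S" "y \<in> S" for x y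
  proof (cases "x = y")
    case True
    then show ?thesis
      using loopless graph_singleton_notin[OF G] \<open>\<Phi> \<noteq> {}\<close> by auto
  next
    case False
    then show ?thesis
      using homs separating that unfolding inj_graph_hom_def by blast
  qed
  have edges: "{x, y} \<in> F \<longleftrightarrow> {f x, f y} \<in> (\<Inter>i<k. image (\<alpha> i) ` E)" if "x \<in> S" "y \<in> S" for x y
  proof -
    have "{f x, f y} \<in> (\<Inter>i<k. image (\<alpha> i) ` E) \<longleftrightarrow> (\<forall>i<k. {(ps ! i) x, (ps ! i) y} \<in> E)"
      using ps_hom \<alpha>_ps that unfolding inj_graph_hom_def
      by (intro doubleton_in_INT_image_iff[OF inj_\<alpha> \<open>E \<subseteq> Pow V\<close>]) auto
    also have "\<dots> \<longleftrightarrow> (\<forall>\<phi>\<in>\<Phi>. {\<phi> x, \<phi> y} \<in> E)"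
      unfolding k_def set_ps[symmetric] by (rule all_set_conv_all_nth[symmetric])
    finally show ?thesis
      using F_iff[OF that] by simp
  qed
  have "graph_iso S F (\<Inter>i<k. \<alpha> i ` V) (\<Inter>i<k. image (\<alpha> i) ` E)"
    unfolding graph_iso_def vertices
  proof (intro exI conjI ballI)
    show "bij_betw f S (f ` S)"
      using inj_f by (simp add: bij_betw_def)
  qed (rule edges)
  then show ?thesis
    unfolding int_reach_def using \<open>2 \<le> k\<close> inj_\<alpha> by (intro exI[of _ k]) auto
qed

lemma is_path_rev:
  assumes "is_path E xs"
  shows "is_path E (rev xs)"
  unfolding is_path_def
proof (intro conjI allI impI)
  show "rev xs \<noteq> []" "distinct (rev xs)"
    using assms unfolding is_path_def by auto
  fix i assume i: "Suc i < length (rev xs)"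
  then have "{xs ! (length xs - Suc (Suc i)), xs ! Suc (length xs - Suc (Suc i))} \<in> E"
    using assms unfolding is_path_def by auto
  moreover have "Suc (length xs - Suc (Suc i)) = length xs - Suc i"
    using i by simp
  ultimately show "{rev xs ! i, rev xs ! Suc i} \<in> E"
    using i by (simp add: rev_nth insert_commute)
qed

lemma is_path_tl:
  assumes "is_path E xs" "tl xs \<noteq> []"
  shows "is_path E (tl xs)"
  using assms unfolding is_path_def by (auto simp: distinct_tl nth_tl)

lemma is_path_append:
  assumes "is_path E xs" "is_path E ys" "{last xs, hd ys} \<in> E" "set xs \<inter> set ys = {}"
  shows "is_path E (xs @ ys)"
  unfolding is_path_def
proof (intro conjI allI impI)
  show "xs @ ys \<noteq> []" "distinct (xs @ ys)"
    using assms unfolding is_path_def by auto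
  fix i assume i: "Suc i < length (xs @ ys)"
  consider "Suc i < length xs" | "Suc i = length xs" | "length xs \<le> i"
    by linarith
  then show "{(xs @ ys) ! i, (xs @ ys) ! Suc i} \<in> E"
  proof cases
    case 1
    then show ?thesis
      using assms(1) unfolding is_path_def by (simp add: nth_append)
  next
    case 2
    then have "i = length xs - 1"
      by simp
    then show ?thesis
      using assms(1-3) 2 unfolding is_path_def by (simp add: nth_append last_conv_nth hd_conv_nth)
  next
    case 3
    then have "Suc (i - length xs) < length ys"
      using i by simp
    then show ?thesis
      using assms(2) 3 unfolding is_path_def by (simp add: nth_append Suc_diff_le)
  qed
qed

lemma extend_inj_graph_hom_into_clique:
  fixes f :: "'b \<Rightarrow> 'a"
  assumes "finite S" "finite B" "W \<subseteq> S" "card (S - W) \<le> card B"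
    and loopless: "\<And>x. {x} \<notin> F"
    and clique: "clique E C" and "B \<subseteq> C" and "B \<subseteq> V"
    and inj_f: "inj_on f W" and f_W: "f ` W \<subseteq> V - B"
    and edges: "\<And>x y. x \<in> W \<Longrightarrow> y \<in> W \<Longrightarrow> {x, y} \<in> F \<Longrightarrow> {f x, f y} \<in> E"
    and boundary: "\<And>x y. x \<in> W \<Longrightarrow> y \<in> S - W \<Longrightarrow> {x, y} \<in> F \<Longrightarrow> f x \<in> C"
  obtains \<phi> where "inj_graph_hom S F V E \<phi>" "\<And>x. x \<in> W \<Longrightarrow> \<phi> x = f x" "\<phi> ` (S - W) \<subseteq> B"
proof -
  obtain g where g: "g ` (S - W) \<subseteq> B" "inj_on g (S - W)"
    using card_le_inj[OF _ \<open>finite B\<close> \<open>card (S - W) \<le> card B\<close>] \<open>finite S\<close> by blast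
  define \<phi> where "\<phi> x = (if x \<in> W then f x else g x)" for x
  have \<phi>_out: "\<phi> ` (S - W) \<subseteq> B"
    using g by (auto simp: \<phi>_def)
  have f_notin_B: "f x \<notin> B" and f_in_V: "f x \<in> V" if "x \<in> W" for x
    using f_W that by auto
  have g_in_B: "g x \<in> B" if "x \<in> S" "x \<notin> W" for x
    using g that by auto
  have inj: "inj_on \<phi> S"
  proof (rule inj_onI)
    fix x y assume "x \<in> S" "y \<in> S" "\<phi> x = \<phi> y"
    then show "x = y"
      using inj_onD[OF inj_f] inj_onD[OF g(2)] f_notin_B[of x] f_notin_B[of y] g_in_B[of x] g_in_B[of y]
      by (cases "x \<in> W"; cases "y \<in> W") (auto simp: \<phi>_def)
  qed
  moreover have "\<phi> ` S \<subseteq> V"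
    using f_in_V g_in_B \<open>B \<subseteq> V\<close> by (auto simp: \<phi>_def)
  moreover have "{\<phi> x, \<phi> y} \<in> E" if "x \<in> S" "y \<in> S" "{x, y} \<in> F" for x y
  proof (cases "x \<in> W \<and> y \<in> W")
    case True
    then show ?thesis
      using edges that(3) by (simp add: \<phi>_def)
  next
    case False
    have "\<phi> x \<noteq> \<phi> y"
      using inj_onD[OF inj] loopless that by fastforce
    moreover have "\<phi> x \<in> C" "\<phi> y \<in> C"
      using False that boundary[of x y] boundary[of y x] g_in_B \<open>B \<subseteq> C\<close>
      by (auto simp: \<phi>_def insert_commute)
    ultimately show ?thesis
      using clique unfolding clique_def by blast
  qed
  ultimately show ?thesis
    using that[of \<phi>] \<phi>_out unfolding inj_graph_hom_def by (simp add: \<phi>_def)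
qed

fun tS_adj :: "nat \<times> nat \<times> nat \<Rightarrow> nat \<times> nat \<times> nat \<Rightarrow> bool" where
  "tS_adj (c, j, p) (c', j', p') \<longleftrightarrow> c' = c \<and> j' \<in> {1,2,3} \<and> p' = Suc p \<and> (j = 0 \<or> j' = j)"

lemma mem_tS_V:
  "(c, j, p) \<in> tS_V t \<longleftrightarrow> c < t \<and> (j = 0 \<and> p = 0 \<or> j \<in> {1,2,3} \<and> 1 \<le> p \<and> p \<le> t)"
  unfolding tS_V_def by auto

lemma tS_V_eq: "tS_V t = {..<t} \<times> ({(0, 0)} \<union> {1,2,3} \<times> {1..t})"
  unfolding tS_V_def by auto

lemma finite_tS_V: "finite (tS_V t)"
  unfolding tS_V_eq by simp

lemma card_tS_V: "card (tS_V t) = t * (3 * t + 1)"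
proof -
  have "card ({(0::nat, 0::nat)} \<union> {1,2,3} \<times> {1..t}) = 1 + 3 * t"
    by (subst card_Un_disjoint) (auto simp: card_cartesian_product)
  then show ?thesis
    unfolding tS_V_eq by (simp add: card_cartesian_product)
qed

lemma tS_edge_imp_adj:
  assumes "{x, y} \<in> tS_E t"
  shows "tS_adj x y \<or> tS_adj y x"
proof -
  consider (centre) c j where "{x, y} = {(c, 0, 0), (c, j, 1)}" "j \<in> {1,2,3}"
    | (leg) c j p where "{x, y} = {(c, j, p), (c, j, p + 1)}" "j \<in> {1,2,3}"
    using assms unfolding tS_E_def by blast
  then show ?thesis
    by cases (auto simp: doubleton_eq_iff)
qed

lemma tS_adj_imp_edge:
  assumes "(c, j, p) \<in> tS_V t" "(c', j', p') \<in> tS_V t" "tS_adj (c, j, p) (c', j', p')"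
  shows "{(c, j, p), (c', j', p')} \<in> tS_E t"
proof (cases "j = 0")
  case True
  then have "p = 0" "c < t" "c' = c" "j' \<in> {1,2,3}" "p' = 1"
    using assms by (auto simp: mem_tS_V)
  then show ?thesis
    using True unfolding tS_E_def by blast
next
  case False
  then have "1 \<le> p" "p < t" "c < t" "c' = c" "j' = j" "j \<in> {1,2,3}" "p' = p + 1"
    using assms by (auto simp: mem_tS_V)
  then show ?thesis
    unfolding tS_E_def by blast
qed

lemma tS_E_iff_adj:
  assumes "x \<in> tS_V t" "y \<in> tS_V t"
  shows "{x, y} \<in> tS_E t \<longleftrightarrow> tS_adj x y \<or> tS_adj y x"
proof
  show "tS_adj x y \<or> tS_adj y x" if "{x, y} \<in> tS_E t"
    using that by (rule tS_edge_imp_adj)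
  obtain c j p c' j' p' where xy: "x = (c, j, p)" "y = (c', j', p')"
    by (cases x, cases y) auto
  show "{x, y} \<in> tS_E t" if "tS_adj x y \<or> tS_adj y x"
    using that
  proof
    assume "tS_adj x y"
    then show ?thesis
      using tS_adj_imp_edge assms unfolding xy by blast
  next
    assume "tS_adj y x"
    then have "{y, x} \<in> tS_E t"
      using tS_adj_imp_edge assms unfolding xy by blast
    then show ?thesis
      by (simp add: insert_commute)
  qed
qed

lemma singleton_notin_tS_E: "{x} \<notin> tS_E t"
  unfolding tS_E_def by (auto simp: doubleton_eq_iff)

text \<open>A centre shadows its whole copy; a leg vertex at distance q from the centre shadows its leg from
  distance q - 1 outwards, together with the centre when q = 1.\<close>
fun tS_shadow :: "nat \<times> nat \<times> nat \<Rightarrow> nat \<times> nat \<times> nat \<Rightarrow> bool" where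
  "tS_shadow (c, j, q) (c', j', p') \<longleftrightarrow> c' = c \<and> (j = 0 \<or> (j' = 0 \<or> j' = j) \<and> q \<le> p' + 1)"

lemma tS_non_edge_outside_shadow:
  assumes "x \<in> tS_V t" "y \<in> tS_V t" "x \<noteq> y" "{x, y} \<notin> tS_E t"
  shows "\<not> tS_shadow x y \<or> \<not> tS_shadow y x"
proof (rule ccontr)
  obtain c j p c' j' p' where xy: "x = (c, j, p)" "y = (c', j', p')"
    by (cases x, cases y) auto
  have x: "j = 0 \<and> p = 0 \<or> j \<in> {1,2,3} \<and> 1 \<le> p" and y: "j' = 0 \<and> p' = 0 \<or> j' \<in> {1,2,3} \<and> 1 \<le> p'"
    using assms(1,2) unfolding xy mem_tS_V by auto
  have no_adj: "\<not> tS_adj x y" "\<not> tS_adj y x"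
    using assms tS_E_iff_adj by blast+
  assume "\<not> ?thesis"
  then have "c' = c" "j = 0 \<or> (j' = 0 \<or> j' = j) \<and> p \<le> p' + 1" "j' = 0 \<or> (j = 0 \<or> j = j') \<and> p' \<le> p + 1"
    unfolding xy by auto
  then show False
    using x y no_adj \<open>x \<noteq> y\<close> unfolding xy by auto
qed

locale clique_with_tripod =
  fixes t :: nat and E :: "'a set set" and A T :: "'a set" and w :: 'a and Q :: "nat \<Rightarrow> 'a list"
  assumes t_pos: "1 \<le> t"
    and graph: "graph (A \<union> T) E"
    and clique: "clique E A"
    and anticomplete: "anticomplete E (A - T) (T - A)"
    and room: "card (tS_V t) \<le> card (A - T) + 2"
    and leg_path: "j \<in> {1,2,3} \<Longrightarrow> is_path E (Q j)"
    and leg_hd: "j \<in> {1,2,3} \<Longrightarrow> hd (Q j) = w"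
    and leg_last: "j \<in> {1,2,3} \<Longrightarrow> last (Q j) \<in> A"
    and leg_subset: "j \<in> {1,2,3} \<Longrightarrow> set (Q j) \<subseteq> T"
    and legs_meet: "j \<in> {1,2,3} \<Longrightarrow> j' \<in> {1,2,3} \<Longrightarrow> j \<noteq> j' \<Longrightarrow> set (Q j) \<inter> set (Q j') \<subseteq> {w}"
    and w_notin_A: "w \<notin> A"
    and A_inter_T: "A \<inter> T \<subseteq> (\<lambda>j. last (Q j)) ` {1,2,3}"
begin

abbreviation "S \<equiv> tS_V t"
abbreviation "F \<equiv> tS_E t"

lemma finite_A: "finite A"
  using graph unfolding graph_def by simp

lemma leg_ne: "j \<in> {1,2,3} \<Longrightarrow> Q j \<noteq> []"
  using leg_path unfolding is_path_def by blast

lemma w_in_T: "w \<in> T"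
  using leg_hd[of 1] leg_ne[of 1] leg_subset[of 1] hd_in_set by fastforce

lemma leg_length:
  assumes "j \<in> {1,2,3}"
  shows "2 \<le> length (Q j)"
proof (rule ccontr)
  assume "\<not> 2 \<le> length (Q j)"
  then obtain v where "Q j = [v]"
    using leg_ne[OF assms] by (cases "Q j" rule: remdups_adj.cases) auto
  then show False
    using leg_hd[OF assms] leg_last[OF assms] w_notin_A by simp
qed

lemma leg_distinct: "j \<in> {1,2,3} \<Longrightarrow> distinct (Q j)"
  using leg_path unfolding is_path_def by blast

lemma leg_nth_0: "j \<in> {1,2,3} \<Longrightarrow> Q j ! 0 = w"
  using leg_hd leg_ne by (simp add: hd_conv_nth)

lemma leg_nth_last: "j \<in> {1,2,3} \<Longrightarrow> Q j ! (length (Q j) - 1) \<in> A"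
  using leg_last leg_ne by (simp add: last_conv_nth)

lemma leg_nth_eq_w_iff: "j \<in> {1,2,3} \<Longrightarrow> p < length (Q j) \<Longrightarrow> Q j ! p = w \<longleftrightarrow> p = 0"
  using leg_path leg_nth_0 leg_ne unfolding is_path_def by (metis length_greater_0_conv nth_eq_iff_index_eq)

lemma leg_nth_in_T: "j \<in> {1,2,3} \<Longrightarrow> p < length (Q j) \<Longrightarrow> Q j ! p \<in> T"
  using leg_subset nth_mem by blast

lemma leg_edge: "j \<in> {1,2,3} \<Longrightarrow> Suc p < length (Q j) \<Longrightarrow> {Q j ! p, Q j ! Suc p} \<in> E"
  using leg_path unfolding is_path_def by blast

lemma hom_extending_partial_hom:
  assumes "W \<subseteq> S" "s0 \<in> W" "s1 \<in> W" "s0 \<noteq> s1" and W_shadow: "\<And>s. s \<in> W \<Longrightarrow> tS_shadow s0 s"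
    and "inj_on f W" "f ` W \<subseteq> T"
    and edge: "\<And>c j p c' j' p'. (c, j, p) \<in> W \<Longrightarrow> (c', j', p') \<in> W \<Longrightarrow>
      tS_adj (c, j, p) (c', j', p') \<Longrightarrow> {f (c, j, p), f (c', j', p')} \<in> E"
    and exit: "\<And>c j p c' j' p'. (c, j, p) \<in> W \<Longrightarrow> (c', j', p') \<in> S - W \<Longrightarrow>
      tS_adj (c, j, p) (c', j', p') \<or> tS_adj (c', j', p') (c, j, p) \<Longrightarrow> f (c, j, p) \<in> A"
  obtains \<phi> where "inj_graph_hom S F (A \<union> T) E \<phi>" "\<phi> s0 = f s0"
    "\<And>s. s \<in> S \<Longrightarrow> \<not> tS_shadow s0 s \<Longrightarrow> \<phi> s \<in> A - T"
proof -
  have "card (S - W) \<le> card (S - {s0, s1})"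
    using assms(1-3) finite_tS_V by (intro card_mono) auto
  also have "\<dots> = card S - 2"
    using assms(1-4) finite_tS_V by (subst card_Diff_subset) auto
  finally have card: "card (S - W) \<le> card (A - T)"
    using room by linarith
  have f_W: "f ` W \<subseteq> (A \<union> T) - (A - T)" and B: "finite (A - T)" "A - T \<subseteq> A" "A - T \<subseteq> A \<union> T"
    using \<open>f ` W \<subseteq> T\<close> finite_A by auto
  show ?thesis
  proof (rule extend_inj_graph_hom_into_clique[OF finite_tS_V B(1) \<open>W \<subseteq> S\<close> card singleton_notin_tS_E
        clique B(2,3) \<open>inj_on f W\<close> f_W])
    show "{f x, f y} \<in> E" if "x \<in> W" "y \<in> W" "{x, y} \<in> F" for x y
    proof -
      obtain c j p c' j' p' where xy: "x = (c, j, p)" "y = (c', j', p')"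
        by (cases x, cases y) auto
      from tS_edge_imp_adj[OF that(3)] show ?thesis
        using edge that unfolding xy by (auto simp: insert_commute)
    qed
    show "f x \<in> A" if "x \<in> W" "y \<in> S - W" "{x, y} \<in> F" for x y
    proof -
      obtain c j p c' j' p' where xy: "x = (c, j, p)" "y = (c', j', p')"
        by (cases x, cases y) auto
      from tS_edge_imp_adj[OF that(3)] show ?thesis
        using exit that unfolding xy by blast
    qed
    fix \<phi> assume "inj_graph_hom S F (A \<union> T) E \<phi>" "\<And>x. x \<in> W \<Longrightarrow> \<phi> x = f x"
      "\<phi> ` (S - W) \<subseteq> A - T"
    then show ?thesis
      using that W_shadow \<open>s0 \<in> W\<close> by blast
  qed
qed

lemma legs_nth_eq:
  assumes "j \<in> {1,2,3}" "j' \<in> {1,2,3}" "p < length (Q j)" "p' < length (Q j')" "Q j ! p = Q j' ! p'"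
  shows "p = 0 \<and> p' = 0 \<or> j = j' \<and> p = p'"
proof (cases "j = j'")
  case True
  then show ?thesis
    using assms leg_distinct by (simp add: nth_eq_iff_index_eq)
next
  case False
  then have "Q j ! p = w"
    using assms legs_meet[of j j'] nth_mem by (metis IntI singletonD subsetD)
  then show ?thesis
    using assms leg_nth_eq_w_iff by metis
qed

lemma leg_nth_notin_A:
  assumes "j \<in> {1,2,3}" "p < length (Q j) - 1"
  shows "Q j ! p \<notin> A"
proof
  assume "Q j ! p \<in> A"
  then have "Q j ! p \<in> A \<inter> T"
    using assms leg_nth_in_T by simp
  then obtain j' where j': "j' \<in> {1,2,3}" and eq: "Q j ! p = Q j' ! (length (Q j') - 1)"
    using A_inter_T leg_ne by (auto simp: last_conv_nth)
  have "p < length (Q j)" "length (Q j') - 1 < length (Q j')"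
    using assms leg_length[OF j'] by auto
  then have "p = 0 \<and> length (Q j') - 1 = 0 \<or> j = j' \<and> p = length (Q j') - 1"
    using legs_nth_eq[OF assms(1) j' _ _ eq] by blast
  then show False
    using assms(2) leg_length[OF j'] by auto
qed

definition centre_part :: "nat \<Rightarrow> (nat \<times> nat \<times> nat) set" where
  "centre_part c0 = {(c, j, p) \<in> S. c = c0 \<and> (j = 0 \<or> p < length (Q j))}"

definition centre_map :: "nat \<times> nat \<times> nat \<Rightarrow> 'a" where
  "centre_map = (\<lambda>(c, j, p). if j = 0 then w else Q j ! p)"

lemma mem_centre_part: "(c, j, p) \<in> centre_part c0 \<longleftrightarrow> c = c0 \<and> c0 < t \<and>
    (j = 0 \<and> p = 0 \<or> j \<in> {1,2,3} \<and> 1 \<le> p \<and> p \<le> t \<and> p < length (Q j))"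
  unfolding centre_part_def mem_tS_V by auto

lemma inj_on_centre_map: "inj_on centre_map (centre_part c0)"
proof (rule inj_onI)
  fix x y assume "x \<in> centre_part c0" "y \<in> centre_part c0" "centre_map x = centre_map y"
  moreover obtain c j p c' j' p' where xy: "x = (c, j, p)" "y = (c', j', p')"
    by (cases x, cases y) auto
  ultimately have x: "(c, j, p) \<in> centre_part c0" and y: "(c', j', p') \<in> centre_part c0"
    and eq: "centre_map (c, j, p) = centre_map (c', j', p')"
    by simp_all
  have "(c, j, p) = (c', j', p')"
  proof (cases "j = 0 \<or> j' = 0")
    case True
    then show ?thesis
      using x y eq leg_nth_eq_w_iff[of j p] leg_nth_eq_w_iff[of j' p']
      by (auto simp: mem_centre_part centre_map_def eq_commute[of w])
  next
    case False
    then show ?thesis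
      using x y eq legs_nth_eq[of j j' p p'] by (auto simp: mem_centre_part centre_map_def)
  qed
  then show "x = y"
    unfolding xy .
qed

lemma centre_hom:
  assumes "c0 < t"
  obtains \<phi> where "inj_graph_hom S F (A \<union> T) E \<phi>" "\<phi> (c0, 0, 0) = w"
    "\<And>s. s \<in> S \<Longrightarrow> \<not> tS_shadow (c0, 0, 0) s \<Longrightarrow> \<phi> s \<in> A - T"
proof -
  let ?W = "centre_part c0" and ?f = centre_map
  have "?W \<subseteq> S" and W_shadow: "\<And>s. s \<in> ?W \<Longrightarrow> tS_shadow (c0, 0, 0) s"
    unfolding centre_part_def by auto
  have "(c0, 0, 0) \<in> ?W" "(c0, 1, 1) \<in> ?W"
    using \<open>c0 < t\<close> t_pos leg_length[of 1] by (auto simp: mem_centre_part)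
  have "?f ` ?W \<subseteq> T"
    using w_in_T leg_nth_in_T by (auto simp: mem_centre_part centre_map_def)
  have edge: "{?f (c, j, p), ?f (c', j', p')} \<in> E"
    if "(c, j, p) \<in> ?W" "(c', j', p') \<in> ?W" "tS_adj (c, j, p) (c', j', p')" for c j p c' j' p'
  proof -
    have adj: "j' \<in> {1,2,3}" "p' = Suc p" "j = 0 \<or> j' = j"
      using that(3) by auto
    then have "Suc p < length (Q j')"
      using that(2) by (simp add: mem_centre_part)
    moreover have "?f (c, j, p) = Q j' ! p"
      using adj that(1) leg_nth_0[OF adj(1)] by (cases "j = 0") (auto simp: mem_centre_part centre_map_def)
    moreover have "?f (c', j', p') = Q j' ! Suc p"
      using adj by (auto simp: centre_map_def)
    ultimately show ?thesis
      using leg_edge[OF adj(1)] by simp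
  qed
  have exit: "?f (c, j, p) \<in> A" if "(c, j, p) \<in> ?W" "(c', j', p') \<in> S - ?W"
    "tS_adj (c, j, p) (c', j', p') \<or> tS_adj (c', j', p') (c, j, p)" for c j p c' j' p'
  proof -
    have "j \<in> {1,2,3}" "p = length (Q j) - 1"
      using that leg_length[of j'] by (auto simp: mem_centre_part mem_tS_V)
    then show ?thesis
      using leg_nth_last by (auto simp: centre_map_def)
  qed
  show ?thesis
  proof (rule hom_extending_partial_hom[OF \<open>?W \<subseteq> S\<close> \<open>(c0, 0, 0) \<in> ?W\<close> \<open>(c0, 1, 1) \<in> ?W\<close> _
        W_shadow inj_on_centre_map \<open>?f ` ?W \<subseteq> T\<close> edge exit])
    fix \<phi> assume "inj_graph_hom S F (A \<union> T) E \<phi>" "\<phi> (c0, 0, 0) = ?f (c0, 0, 0)"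
      "\<And>s. s \<in> S \<Longrightarrow> \<not> tS_shadow (c0, 0, 0) s \<Longrightarrow> \<phi> s \<in> A - T"
    then show ?thesis
      using that by (simp add: centre_map_def)
  qed simp
qed

text \<open>For a leg vertex (c0, j0, q), leg j0 is laid along P from its vertex at distance q - 1
  (the centre if q = 1) onwards, the vertex itself landing on P ! 1.\<close>
definition leg_part :: "'a list \<Rightarrow> nat \<Rightarrow> nat \<Rightarrow> nat \<Rightarrow> (nat \<times> nat \<times> nat) set" where
  "leg_part P c0 j0 q = {(c, j, p) \<in> S. c = c0 \<and> (j = 0 \<or> j = j0) \<and> q \<le> p + 1 \<and> p + 1 - q < length P}"

definition leg_map :: "'a list \<Rightarrow> nat \<Rightarrow> nat \<times> nat \<times> nat \<Rightarrow> 'a" where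
  "leg_map P q = (\<lambda>(c, j, p). P ! (p + 1 - q))"

lemma mem_leg_part:
  assumes "c0 < t" "j0 \<in> {1,2,3}"
  shows "(c, j, p) \<in> leg_part P c0 j0 q \<longleftrightarrow> c = c0 \<and> (j = 0 \<and> p = 0 \<or> j = j0 \<and> 1 \<le> p \<and> p \<le> t)
    \<and> q \<le> p + 1 \<and> p + 1 - q < length P"
  using assms unfolding leg_part_def mem_tS_V by auto

lemma inj_on_leg_map:
  assumes "distinct P" "c0 < t" "j0 \<in> {1,2,3}"
  shows "inj_on (leg_map P q) (leg_part P c0 j0 q)"
proof (rule inj_onI)
  fix x y assume "x \<in> leg_part P c0 j0 q" "y \<in> leg_part P c0 j0 q" "leg_map P q x = leg_map P q y"
  moreover obtain c j p c' j' p' where xy: "x = (c, j, p)" "y = (c', j', p')"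
    by (cases x, cases y) auto
  ultimately have x: "(c, j, p) \<in> leg_part P c0 j0 q" and y: "(c', j', p') \<in> leg_part P c0 j0 q"
    and "P ! (p + 1 - q) = P ! (p' + 1 - q)"
    by (simp_all add: leg_map_def)
  then have "p + 1 - q = p' + 1 - q"
    using assms nth_eq_iff_index_eq unfolding mem_leg_part[OF assms(2,3)] by blast
  then show "x = y"
    using x y assms unfolding xy mem_leg_part[OF assms(2,3)] by auto
qed

lemma leg_hom:
  assumes P: "is_path E P" "set P \<subseteq> T" "hd P \<in> A" "last P \<in> A" "2 \<le> length P"
    and s0: "(c0, j0, q) \<in> S" "j0 \<noteq> 0"
  obtains \<phi> where "inj_graph_hom S F (A \<union> T) E \<phi>" "\<phi> (c0, j0, q) = P ! 1"
    "\<And>s. s \<in> S \<Longrightarrow> \<not> tS_shadow (c0, j0, q) s \<Longrightarrow> \<phi> s \<in> A - T"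
proof -
  have q: "c0 < t" "j0 \<in> {1,2,3}" "1 \<le> q" "q \<le> t"
    using s0 by (auto simp: mem_tS_V)
  let ?W = "leg_part P c0 j0 q" and ?f = "leg_map P q"
  note W_iff = mem_leg_part[OF q(1,2)]
  have "?W \<subseteq> S" and W_shadow: "\<And>s. s \<in> ?W \<Longrightarrow> tS_shadow (c0, j0, q) s"
    using s0(2) unfolding leg_part_def by auto
  define pred where "pred = (if q = 1 then (c0, 0, 0) else (c0, j0, q - 1))"
  have "(c0, j0, q) \<in> ?W" "pred \<in> ?W" "(c0, j0, q) \<noteq> pred"
    using q P(5) s0(2) by (auto simp: pred_def W_iff)
  have "?f ` ?W \<subseteq> T"
    using P(2) nth_mem by (fastforce simp: leg_part_def leg_map_def)
  have P_ends: "P ! 0 \<in> A" "P ! (length P - 1) \<in> A"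
    using P by (auto simp: hd_conv_nth last_conv_nth is_path_def)
  have edge: "{?f (c, j, p), ?f (c', j', p')} \<in> E"
    if "(c, j, p) \<in> ?W" "(c', j', p') \<in> ?W" "tS_adj (c, j, p) (c', j', p')" for c j p c' j' p'
  proof -
    have "p' = Suc p" "q \<le> p + 1" "Suc (p + 1 - q) < length P"
      using that by (auto simp: W_iff)
    then show ?thesis
      using P(1) unfolding is_path_def leg_map_def by (simp add: Suc_diff_le)
  qed
  have exit: "?f (c, j, p) \<in> A" if "(c, j, p) \<in> ?W" "(c', j', p') \<in> S - ?W"
    "tS_adj (c, j, p) (c', j', p') \<or> tS_adj (c', j', p') (c, j, p)" for c j p c' j' p'
  proof -
    have "p + 1 - q = 0 \<or> p + 1 - q = length P - 1"
      using that q by (auto simp: W_iff mem_tS_V)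
    then show ?thesis
      using P_ends by (auto simp: leg_map_def)
  qed
  have "distinct P"
    using P(1) unfolding is_path_def by blast
  show ?thesis
  proof (rule hom_extending_partial_hom[OF \<open>?W \<subseteq> S\<close> \<open>(c0, j0, q) \<in> ?W\<close> \<open>pred \<in> ?W\<close>
        \<open>(c0, j0, q) \<noteq> pred\<close> W_shadow inj_on_leg_map[OF \<open>distinct P\<close> q(1,2)] \<open>?f ` ?W \<subseteq> T\<close> edge exit])
    fix \<phi> assume "inj_graph_hom S F (A \<union> T) E \<phi>" "\<phi> (c0, j0, q) = ?f (c0, j0, q)"
      "\<And>s. s \<in> S \<Longrightarrow> \<not> tS_shadow (c0, j0, q) s \<Longrightarrow> \<phi> s \<in> A - T"
    then show ?thesis
      using that by (simp add: leg_map_def)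
  qed
qed

lemma path_between_legs:
  obtains P where "is_path E P" "set P \<subseteq> T" "hd P \<in> A" "last P \<in> A" "2 \<le> length P" "P ! 1 \<notin> A"
proof -
  define P where "P = rev (Q 1) @ tl (Q 2)"
  have len: "2 \<le> length (Q 1)" "2 \<le> length (Q 2)"
    using leg_length by auto
  have tl_ne: "tl (Q 2) \<noteq> []"
    using len by (cases "Q 2") auto
  have w_notin_tl: "w \<notin> set (tl (Q 2))"
    using leg_distinct[of 2] leg_hd[of 2] leg_ne[of 2] by (cases "Q 2") auto
  have tl_subset: "set (tl (Q 2)) \<subseteq> set (Q 2)"
    by (cases "Q 2") auto
  have "set (rev (Q 1)) \<inter> set (tl (Q 2)) = {}"
    using legs_meet[of 1 2] tl_subset w_notin_tl by auto
  moreover have "{last (rev (Q 1)), hd (tl (Q 2))} \<in> E"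
    using leg_edge[of 2 0] len leg_hd[of 1] leg_nth_0[of 2] tl_ne
    by (simp add: last_rev hd_conv_nth nth_tl)
  moreover have "is_path E (Q 1)" "is_path E (Q 2)"
    using leg_path by auto
  ultimately have "is_path E P"
    unfolding P_def by (intro is_path_append is_path_rev is_path_tl tl_ne)
  moreover have "set P \<subseteq> T"
    using leg_subset[of 1] leg_subset[of 2] tl_subset by (auto simp: P_def)
  moreover have "hd P \<in> A" "last P \<in> A"
    using leg_last[of 1] leg_last[of 2] tl_ne len by (auto simp: P_def hd_append hd_rev last_tl)
  moreover have "2 \<le> length P"
    using len by (simp add: P_def)
  moreover have "P ! 1 = Q 1 ! (length (Q 1) - 2)"
    using len by (simp add: P_def nth_append rev_nth numeral_2_eq_2)
  then have "P ! 1 \<notin> A"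
    using leg_nth_notin_A[of 1 "length (Q 1) - 2"] len by simp
  ultimately show ?thesis
    using that by blast
qed

lemma separating_homs:
  obtains \<Psi> where "\<And>s. s \<in> S \<Longrightarrow> inj_graph_hom S F (A \<union> T) E (\<Psi> s)"
    "\<And>s. s \<in> S \<Longrightarrow> \<Psi> s s \<in> T - A"
    "\<And>s s'. s \<in> S \<Longrightarrow> s' \<in> S \<Longrightarrow> \<not> tS_shadow s s' \<Longrightarrow> \<Psi> s s' \<in> A - T"
proof -
  define separates where "separates s \<phi> \<longleftrightarrow> inj_graph_hom S F (A \<union> T) E \<phi> \<and> \<phi> s \<in> T - A \<and>
      (\<forall>s'\<in>S. \<not> tS_shadow s s' \<longrightarrow> \<phi> s' \<in> A - T)" for s \<phi>
  obtain P where P: "is_path E P" "set P \<subseteq> T" "hd P \<in> A" "last P \<in> A" "2 \<le> length P" "P ! 1 \<notin> A"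
    by (rule path_between_legs)
  have "\<exists>\<phi>. separates s \<phi>" if "s \<in> S" for s
  proof -
    obtain c j p where s: "s = (c, j, p)"
      by (cases s) auto
    show ?thesis
    proof (cases "j = 0")
      case True
      then have "c < t" "p = 0"
        using that by (auto simp: s mem_tS_V)
      show ?thesis
      proof (rule centre_hom[OF \<open>c < t\<close>])
        fix \<phi> assume "inj_graph_hom S F (A \<union> T) E \<phi>" "\<phi> (c, 0, 0) = w"
          "\<And>s'. s' \<in> S \<Longrightarrow> \<not> tS_shadow (c, 0, 0) s' \<Longrightarrow> \<phi> s' \<in> A - T"
        then show ?thesis
          using w_in_T w_notin_A unfolding separates_def s True \<open>p = 0\<close> by blast
      qed
    next
      case False
      have "P ! 1 \<in> T"
        using P(2,5) nth_mem[of 1 P] by auto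
      show ?thesis
      proof (rule leg_hom[OF P(1-5) that[unfolded s] False])
        fix \<phi> assume "inj_graph_hom S F (A \<union> T) E \<phi>" "\<phi> (c, j, p) = P ! 1"
          "\<And>s'. s' \<in> S \<Longrightarrow> \<not> tS_shadow (c, j, p) s' \<Longrightarrow> \<phi> s' \<in> A - T"
        then show ?thesis
          using \<open>P ! 1 \<in> T\<close> P(6) unfolding separates_def s by auto
      qed
    qed
  qed
  then have "separates s (SOME \<phi>. separates s \<phi>)" if "s \<in> S" for s
    using someI_ex that by metis
  then show ?thesis
    using that[of "\<lambda>s. SOME \<phi>. separates s \<phi>"] unfolding separates_def by blast
qed

lemma int_reach_tS: "int_reach (A \<union> T) E S F"
proof (rule separating_homs)
  fix \<Psi> assume \<Psi>: "\<And>s. s \<in> S \<Longrightarrow> inj_graph_hom S F (A \<union> T) E (\<Psi> s)"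
    "\<And>s. s \<in> S \<Longrightarrow> \<Psi> s s \<in> T - A"
    "\<And>s s'. s \<in> S \<Longrightarrow> s' \<in> S \<Longrightarrow> \<not> tS_shadow s s' \<Longrightarrow> \<Psi> s s' \<in> A - T"
  have "(0, 0, 0) \<in> S"
    using t_pos by (simp add: mem_tS_V)
  show ?thesis
  proof (rule int_reach_if_separating_homs[OF graph finite_tS_V singleton_notin_tS_E, of "\<Psi> ` S"])
    fix x y assume "x \<in> S" "y \<in> S" "x \<noteq> y" "{x, y} \<notin> F"
    then consider "\<not> tS_shadow x y" | "\<not> tS_shadow y x"
      using tS_non_edge_outside_shadow by blast
    then show "\<exists>\<phi>\<in>\<Psi> ` S. {\<phi> x, \<phi> y} \<notin> E"
    proof cases
      case 1
      then have "{\<Psi> x y, \<Psi> x x} \<notin> E"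
        using anticomplete \<Psi>(2,3) \<open>x \<in> S\<close> \<open>y \<in> S\<close> unfolding anticomplete_def by blast
      then show ?thesis
        using \<open>x \<in> S\<close> by (auto simp: insert_commute)
    next
      case 2
      then have "{\<Psi> y x, \<Psi> y y} \<notin> E"
        using anticomplete \<Psi>(2,3) \<open>x \<in> S\<close> \<open>y \<in> S\<close> unfolding anticomplete_def by blast
      then show ?thesis
        using \<open>y \<in> S\<close> by blast
    qed
  qed (use \<Psi>(1) \<open>(0, 0, 0) \<in> S\<close> finite_tS_V in auto)
qed

end

theorem mainTheorem9:
  fixes t :: nat and A :: "'a set" and E :: "'a set set"
    and Q1 Q2 Q3 :: "'a list" and w :: 'a
  assumes t: "t \<ge> 1"
    and G: "graph (A \<union> (set Q1 \<union> set Q2 \<union> set Q3)) E"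
    and sizeA: "card A \<ge> 3 * t^2 + t + 1"
    and cliqueA: "clique E A"
    and paths: "is_path E Q1" "is_path E Q2" "is_path E Q3"
    and start: "hd Q1 = w" "hd Q2 = w" "hd Q3 = w"
    and wA: "w \<notin> A"
    and ends: "last Q1 \<in> A" "last Q2 \<in> A" "last Q3 \<in> A"
    and disj: "(set Q1 - {w}) \<inter> (set Q2 - {w}) = {}"
              "(set Q1 - {w}) \<inter> (set Q3 - {w}) = {}"
              "(set Q2 - {w}) \<inter> (set Q3 - {w}) = {}"
    and degw: "degree (A \<union> (set Q1 \<union> set Q2 \<union> set Q3)) E w = 3"
    and AT: "card (A \<inter> (set Q1 \<union> set Q2 \<union> set Q3)) = 3"
            "A \<inter> (set Q1 \<union> set Q2 \<union> set Q3) = {last Q1, last Q2, last Q3}"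
    and cyc: "is_cycle (set Q1 \<union> set Q2) (induced_edges E (set Q1 \<union> set Q2))"
    and anti: "anticomplete E (A - (set Q1 \<union> set Q2 \<union> set Q3)) ((set Q1 \<union> set Q2 \<union> set Q3) - A)"
  shows "int_reach (A \<union> (set Q1 \<union> set Q2 \<union> set Q3)) E (tS_V t) (tS_E t)"
proof -
  define T where "T = set Q1 \<union> set Q2 \<union> set Q3"
  define Q where "Q j = (if j = 1 then Q1 else if j = 2 then Q2 else Q3)" for j :: nat
  have "finite A"
    using G unfolding graph_def by simp
  then have "card (A - T) = card A - 3"
    using AT(1) by (simp add: T_def card_Diff_subset_Int)
  then have room: "card (tS_V t) \<le> card (A - T) + 2"
    using sizeA by (simp add: card_tS_V power2_eq_square algebra_simps)
  have "clique_with_tripod t E A T w Q"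
    using t G cliqueA anti room paths start ends wA disj AT(2)
    by unfold_locales (auto simp: T_def Q_def)
  then show ?thesis
    unfolding T_def by (rule clique_with_tripod.int_reach_tS)
qed

end
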